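(* Let $a:[0,\infty)\to\mathbb{R}$ satisfy $c_1\le a(r)\le c_2$ for all $r\ge0$ (constants $0<c_1\le c_2$) and $|a(r_1)-a(r_2)|\le L_a|r_1-r_2|$ for all $r_1,r_2\ge0$ (constant $L_a>0$). For $x_1,\dots,x_N\in\mathbb{R}^d$ set $\phi_{ij}=\frac{a(\|x_i-x_j\|)}{\sum_{k=1}^Na(\|x_i-x_k\|)}$. Then \[ |\phi_{il}-\phi_{jl}|\le\|\phi\|_{\mathrm{Lip}}\|x_i-x_j\|\qquad\text{for all } i,j,l\in\{1,\dots,N\}, \] where $\|\phi\|_{\mathrm{Lip}}:=\frac{L_a}{Nc_1}\left(1+\frac{c_2}{c_1}\right)$.
   Context: $\|\cdot\|$ denotes the Euclidean norm on $\mathbb{R}^d$. *)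

theory Defs
  imports "HOL-Analysis.Analysis"
begin

definition phi :: "(real \<Rightarrow> real) \<Rightarrow> nat \<Rightarrow> (nat \<Rightarrow> 'a::euclidean_space) \<Rightarrow> nat \<Rightarrow> nat \<Rightarrow> real" where
  "phi a N x i j = a (norm (x i - x j)) / (\<Sum>k=1..N. a (norm (x i - x k)))"

definition phi_Lip :: "real \<Rightarrow> real \<Rightarrow> real \<Rightarrow> nat \<Rightarrow> real" where
  "phi_Lip La c1 c2 N = La / (real N * c1) * (1 + c2 / c1)"

end

theory Submission
  imports Defs
begin

text \<open>Both numerator and denominator of \<open>\<phi>\<close> move by at most a multiple of
  \<open>\<parallel>x\<^sub>i - x\<^sub>j\<parallel>\<close>, since \<open>y \<mapsto> a(\<parallel>y - z\<parallel>)\<close> inherits the Lipschitz constant of \<open>a\<close>; the denominators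
  are at least \<open>N c\<^sub>1\<close> and the numerators at most \<open>c\<^sub>2\<close>, so the elementary perturbation bound for
  a quotient gives the claim.\<close>

lemma lipschitz_on_norm_diff:
  fixes z :: "'a::real_normed_vector"
  assumes "L-lipschitz_on {0..} a"
  shows "L-lipschitz_on UNIV (\<lambda>y. a (norm (y - z)))"
proof -
  have "1-lipschitz_on UNIV (\<lambda>y. norm (y - z))"
    by (rule lipschitz_onI) (auto simp: dist_norm intro: order_trans[OF norm_triangle_ineq3])
  moreover have "L-lipschitz_on ((\<lambda>y. norm (y - z)) ` UNIV) a"
    using assms by (rule lipschitz_on_subset) auto
  ultimately show ?thesis
    using lipschitz_on_compose2 by fastforce
qed

lemma abs_sum_diff_le_card:
  fixes f g :: "'a \<Rightarrow> real"
  assumes "\<And>k. k \<in> K \<Longrightarrow> \<bar>f k - g k\<bar> \<le> e"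
  shows "\<bar>sum f K - sum g K\<bar> \<le> real (card K) * e"
proof -
  have "\<bar>sum f K - sum g K\<bar> \<le> (\<Sum>k\<in>K. \<bar>f k - g k\<bar>)"
    by (metis sum_abs sum_subtractf)
  also have "\<dots> \<le> real (card K) * e"
    using assms by (rule sum_bounded_above)
  finally show ?thesis .
qed

lemma abs_quotient_diff_le:
  fixes A A' S S' e f m M :: real
  assumes "\<bar>A - A'\<bar> \<le> e" and "\<bar>S - S'\<bar> \<le> f"
    and "0 \<le> A'" and "A' \<le> M" and "0 < m" and "m \<le> S" and "m \<le> S'"
  shows "\<bar>A / S - A' / S'\<bar> \<le> e / m + M * f / m\<^sup>2"
proof -
  have S: "0 < S" "0 < S'" using assms by linarith+
  have "A / S - A' / S' = (A - A') / S + A' * (S' - S) / (S * S')"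
    using S by (simp add: field_simps)
  moreover have "\<bar>(A - A') / S\<bar> \<le> e / m"
  proof -
    have "\<bar>(A - A') / S\<bar> = \<bar>A - A'\<bar> / S" using S by simp
    also have "\<dots> \<le> e / m" using assms S by (intro frac_le) auto
    finally show ?thesis .
  qed
  moreover have "\<bar>A' * (S' - S) / (S * S')\<bar> \<le> M * f / m\<^sup>2"
  proof -
    have "\<bar>A' * (S' - S) / (S * S')\<bar> = A' * \<bar>S - S'\<bar> / (S * S')"
      using S assms(3) by (simp add: abs_mult abs_minus_commute)
    also have "\<dots> \<le> M * f / (m * m)"
      using S assms by (intro frac_le mult_mono mult_pos_pos) auto
    finally show ?thesis by (simp add: power2_eq_square)
  qed
  ultimately show ?thesis by linarith
qed

theorem lemma3p1:
  fixes a :: "real \<Rightarrow> real" and c1 c2 La :: real and N :: nat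
    and x :: "nat \<Rightarrow> 'a::euclidean_space"
  assumes "0 < c1" and "c1 \<le> c2" and "0 < La"
    and "\<And>r. r \<ge> 0 \<Longrightarrow> c1 \<le> a r \<and> a r \<le> c2"
    and "\<And>r1 r2. r1 \<ge> 0 \<Longrightarrow> r2 \<ge> 0 \<Longrightarrow> \<bar>a r1 - a r2\<bar> \<le> La * \<bar>r1 - r2\<bar>"
    and "i \<in> {1..N}" and "j \<in> {1..N}" and "l \<in> {1..N}"
  shows "\<bar>phi a N x i l - phi a N x j l\<bar> \<le> phi_Lip La c1 c2 N * norm (x i - x j)"
proof -
  define D where "D = norm (x i - x j)"
  define S where "S p = (\<Sum>k=1..N. a (norm (x p - x k)))" for p
  have "La-lipschitz_on {0..} a"
    using assms(3,5) by (intro lipschitz_onI) (auto simp: dist_real_def)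
  then have weight_diff: "\<bar>a (norm (x i - x k)) - a (norm (x j - x k))\<bar> \<le> La * D" for k
    unfolding D_def using lipschitz_on_normD[OF lipschitz_on_norm_diff] by fastforce
  have "real N * c1 \<le> S p" for p
    unfolding S_def using sum_bounded_below[of "{1..N}" c1] assms(4) by simp
  moreover have "\<bar>S i - S j\<bar> \<le> real N * (La * D)"
    unfolding S_def using abs_sum_diff_le_card[of "{1..N}"] weight_diff by simp
  moreover have "0 < real N * c1"
    using assms(1,6) by simp
  ultimately have "\<bar>phi a N x i l - phi a N x j l\<bar>
      \<le> La * D / (real N * c1) + c2 * (real N * (La * D)) / (real N * c1)\<^sup>2"
    unfolding phi_def S_def[symmetric]
    using assms(4)[of "norm (x j - x l)"] assms(1)
    by (intro abs_quotient_diff_le weight_diff) auto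
  also have "\<dots> = phi_Lip La c1 c2 N * D"
    using \<open>0 < real N * c1\<close> assms(1) by (simp add: phi_Lip_def field_simps power2_eq_square)
  finally show ?thesis unfolding D_def .
qed

end
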